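(* Let $G=(V,E)$ be an infinite, connected, locally finite, vertex-transitive graph, $o\in V$, $\Gamma\subset\operatorname{Aut}(G)$ a group acting transitively on $V$, and $\mathbb{P}$ a $\Gamma$-invariant and ergodic probability measure on $\mathbb{R}^V$ with $\mathbb{E}|s(o)|<\infty$. If $s$ has law $\mathbb{P}$ and $\mathbb{P}\{s\text{ stabilizes}\}=1$, then the odometer $u_\infty$ of $s$ has $\Gamma$-invariant law. Moreover, if $\mathbb{E}\,s(o)=1$, then almost surely $s_\infty\equiv 1$ and $\Delta u_\infty=1-s$.
   Context: $\Delta u(x)=\sum_{y\sim x}(u(y)-u(x))$. For $s:V\to\mathbb{R}$, $\mathcal{F}_s=\{f\ge0: s+\Delta f\le1\}$; $s$ stabilizes if $\mathcal{F}_s\ne\emptyset$; its odometer is $u_\infty(x)=\inf\{f(x):f\in\mathcal{F}_s\}$ and its stabilization is $s_\infty=s+\Delta u_\infty$. A random function has $\Gamma$-invariant law if its law is preserved by $(T_\alpha f)(x)=f(\alpha^{-1}x)$ for all $\alpha\in\Gamma$. *)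

theory Defs
  imports "HOL-Probability.Probability"
begin

text \<open>A graph on the vertex type 'v is given by a symmetric irreflexive
adjacency relation E; the vertex set is UNIV.\<close>

definition graph_laplacian :: "('v \<Rightarrow> 'v \<Rightarrow> bool) \<Rightarrow> ('v \<Rightarrow> real) \<Rightarrow> 'v \<Rightarrow> real" where
  "graph_laplacian E u x = (\<Sum>y\<in>{y. E x y}. u y - u x)"

definition simple_graph :: "('v \<Rightarrow> 'v \<Rightarrow> bool) \<Rightarrow> bool" where
  "simple_graph E \<longleftrightarrow> (\<forall>x y. E x y \<longrightarrow> E y x) \<and> (\<forall>x. \<not> E x x)"

definition locally_finite :: "('v \<Rightarrow> 'v \<Rightarrow> bool) \<Rightarrow> bool" where
  "locally_finite E \<longleftrightarrow> (\<forall>x. finite {y. E x y})"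

definition connected_graph :: "('v \<Rightarrow> 'v \<Rightarrow> bool) \<Rightarrow> bool" where
  "connected_graph E \<longleftrightarrow> (\<forall>x y. E\<^sup>*\<^sup>* x y)"

definition graph_aut :: "('v \<Rightarrow> 'v \<Rightarrow> bool) \<Rightarrow> ('v \<Rightarrow> 'v) set" where
  "graph_aut E = {\<alpha>. bij \<alpha> \<and> (\<forall>x y. E x y \<longleftrightarrow> E (\<alpha> x) (\<alpha> y))}"

definition vertex_transitive :: "('v \<Rightarrow> 'v \<Rightarrow> bool) \<Rightarrow> bool" where
  "vertex_transitive E \<longleftrightarrow> (\<forall>x y. \<exists>\<alpha>\<in>graph_aut E. \<alpha> x = y)"

definition transitive_aut_group :: "('v \<Rightarrow> 'v \<Rightarrow> bool) \<Rightarrow> ('v \<Rightarrow> 'v) set \<Rightarrow> bool" where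
  "transitive_aut_group E \<Gamma> \<longleftrightarrow>
     \<Gamma> \<subseteq> graph_aut E \<and> id \<in> \<Gamma> \<and>
     (\<forall>\<alpha>\<in>\<Gamma>. \<forall>\<beta>\<in>\<Gamma>. \<alpha> \<circ> \<beta> \<in> \<Gamma>) \<and> (\<forall>\<alpha>\<in>\<Gamma>. inv \<alpha> \<in> \<Gamma>) \<and>
     (\<forall>x y. \<exists>\<alpha>\<in>\<Gamma>. \<alpha> x = y)"

definition shift :: "('v \<Rightarrow> 'v) \<Rightarrow> ('v \<Rightarrow> real) \<Rightarrow> ('v \<Rightarrow> real)" where
  "shift \<alpha> f = (\<lambda>x. f (inv \<alpha> x))"

abbreviation config_space :: "('v \<Rightarrow> real) measure" where
  "config_space \<equiv> PiM UNIV (\<lambda>_. borel)"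

definition invariant_law :: "('v \<Rightarrow> 'v) set \<Rightarrow> ('v \<Rightarrow> real) measure \<Rightarrow> bool" where
  "invariant_law \<Gamma> Q \<longleftrightarrow> (\<forall>\<alpha>\<in>\<Gamma>. distr Q config_space (shift \<alpha>) = Q)"

definition ergodic_law :: "('v \<Rightarrow> 'v) set \<Rightarrow> ('v \<Rightarrow> real) measure \<Rightarrow> bool" where
  "ergodic_law \<Gamma> Q \<longleftrightarrow>
     (\<forall>A\<in>sets Q. (\<forall>\<alpha>\<in>\<Gamma>. shift \<alpha> -` A \<inter> space Q = A) \<longrightarrow>
        measure Q A = 0 \<or> measure Q A = 1)"

definition stab_set :: "('v \<Rightarrow> 'v \<Rightarrow> bool) \<Rightarrow> ('v \<Rightarrow> real) \<Rightarrow> ('v \<Rightarrow> real) set" where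
  "stab_set E s = {f. (\<forall>x. f x \<ge> 0) \<and> (\<forall>x. s x + graph_laplacian E f x \<le> 1)}"

definition stabilizes :: "('v \<Rightarrow> 'v \<Rightarrow> bool) \<Rightarrow> ('v \<Rightarrow> real) \<Rightarrow> bool" where
  "stabilizes E s \<longleftrightarrow> stab_set E s \<noteq> {}"

definition odometer :: "('v \<Rightarrow> 'v \<Rightarrow> bool) \<Rightarrow> ('v \<Rightarrow> real) \<Rightarrow> ('v \<Rightarrow> real)" where
  "odometer E s = (\<lambda>x. Inf ((\<lambda>f. f x) ` stab_set E s))"

definition stabilization :: "('v \<Rightarrow> 'v \<Rightarrow> bool) \<Rightarrow> ('v \<Rightarrow> real) \<Rightarrow> ('v \<Rightarrow> real)" where
  "stabilization E s = (\<lambda>x. s x + graph_laplacian E (odometer E s) x)"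

end

theory Submission
  imports Defs
begin

text \<open>Graph automorphisms carry the stabilizing functions of \<open>s\<close> onto those of the shifted
  configuration, so the odometer commutes with the action of \<open>\<Gamma>\<close> and its law inherits the
  invariance; it is measurable as the increasing limit of the relaxation iterates. By stationarity
  the odometer and \<open>s\<close> have the same law at every vertex, so the Laplacian of the odometer truncated
  at level \<open>M\<close> has mean zero, and it is bounded above by \<open>\<bar>1 - s x\<bar>\<close>; Fatou's lemma then shows that
  \<open>\<Delta>u\<^sub>\<infinity>(x)\<close> is integrable with nonnegative mean. Hence \<open>1 - s x - \<Delta>u\<^sub>\<infinity>(x) \<ge> 0\<close> has
  nonpositive mean when \<open>\<bbbE> s(o) = 1\<close>, and vanishes almost surely.\<close>

lemma graph_laplacian_eq:
  assumes "finite {y. E x y}"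
  shows "graph_laplacian E f x = (\<Sum>y\<in>{y. E x y}. f y) - real (card {y. E x y}) * f x"
  unfolding graph_laplacian_def using assms by (simp add: sum_subtractf)

text \<open>\<open>relax E s f x\<close> is the least nonnegative value at \<open>x\<close> satisfying the stability
  constraint at \<open>x\<close> when the neighbours keep their \<open>f\<close>-values, so the stabilizing functions are
  the prefixed points of the monotone map \<open>relax E s\<close> and the odometer is the limit of its iterates
  from \<open>0\<close>.\<close>

definition relax :: "('v \<Rightarrow> 'v \<Rightarrow> bool) \<Rightarrow> ('v \<Rightarrow> real) \<Rightarrow> ('v \<Rightarrow> real) \<Rightarrow> 'v \<Rightarrow> real" where
  "relax E s f x = max 0 (((\<Sum>y\<in>{y. E x y}. f y) + s x - 1) / real (card {y. E x y}))"

primrec relax_iter :: "('v \<Rightarrow> 'v \<Rightarrow> bool) \<Rightarrow> ('v \<Rightarrow> real) \<Rightarrow> nat \<Rightarrow> 'v \<Rightarrow> real" where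
  "relax_iter E s 0 = (\<lambda>_. 0)"
| "relax_iter E s (Suc n) = relax E s (relax_iter E s n)"

context
  fixes E :: "'v \<Rightarrow> 'v \<Rightarrow> bool"
  assumes finite_nbhd: "\<And>x. finite {y. E x y}"
      and nonempty_nbhd: "\<And>x. {y. E x y} \<noteq> {}"
begin

lemma stab_set_iff_relax_le: "f \<in> stab_set E s \<longleftrightarrow> (\<forall>x. relax E s f x \<le> f x)"
proof -
  have "(0 \<le> f x \<and> s x + graph_laplacian E f x \<le> 1) \<longleftrightarrow> relax E s f x \<le> f x" for x
  proof -
    have "real (card {y. E x y}) > 0"
      using finite_nbhd[of x] nonempty_nbhd[of x] by (simp add: card_gt_0_iff)
    then have "s x + graph_laplacian E f x \<le> 1 \<longleftrightarrow>
               ((\<Sum>y\<in>{y. E x y}. f y) + s x - 1) / real (card {y. E x y}) \<le> f x"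
      by (simp add: graph_laplacian_eq[OF finite_nbhd] pos_divide_le_eq algebra_simps)
    then show ?thesis unfolding relax_def by auto
  qed
  then show ?thesis unfolding stab_set_def by blast
qed

lemma relax_mono: "(\<And>x. f x \<le> g x) \<Longrightarrow> relax E s f x \<le> relax E s g x"
  unfolding relax_def
  by (intro max.mono order_refl divide_right_mono add_right_mono diff_right_mono sum_mono) auto

lemma incseq_relax_iter: "incseq (\<lambda>n. relax_iter E s n x)"
proof (rule incseq_SucI)
  show "relax_iter E s n x \<le> relax_iter E s (Suc n) x" for n
  proof (induction n arbitrary: x)
    case 0
    then show ?case by (simp add: relax_def)
  next
    case (Suc n)
    then show ?case by (simp add: relax_mono)
  qed
qed

lemma relax_iter_le_stab_set:
  assumes "f \<in> stab_set E s"
  shows "relax_iter E s n x \<le> f x"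
proof (induction n arbitrary: x)
  case 0
  then show ?case using assms by (simp add: stab_set_def)
next
  case (Suc n)
  have "relax E s (relax_iter E s n) x \<le> relax E s f x"
    using Suc by (intro relax_mono)
  also have "\<dots> \<le> f x"
    using assms stab_set_iff_relax_le by blast
  finally show ?case by simp
qed

context
  fixes s :: "'v \<Rightarrow> real"
  assumes bdd: "\<And>x. bdd_above (range (\<lambda>n. relax_iter E s n x))"
begin

lemma relax_iter_LIMSEQ: "(\<lambda>n. relax_iter E s n x) \<longlonglongrightarrow> lim (\<lambda>n. relax_iter E s n x)"
  using LIMSEQ_incseq_SUP[OF bdd incseq_relax_iter] by (metis limI)

lemma lim_relax_iter_in_stab_set: "(\<lambda>x. lim (\<lambda>n. relax_iter E s n x)) \<in> stab_set E s"
proof -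
  define w where "w x = lim (\<lambda>n. relax_iter E s n x)" for x
  have "relax E s w x = w x" for x
  proof (rule LIMSEQ_unique)
    show "(\<lambda>n. relax E s (relax_iter E s n) x) \<longlonglongrightarrow> relax E s w x"
      unfolding relax_def w_def
      by (intro tendsto_intros relax_iter_LIMSEQ) (use finite_nbhd nonempty_nbhd in auto)
    show "(\<lambda>n. relax E s (relax_iter E s n) x) \<longlonglongrightarrow> w x"
      using LIMSEQ_Suc[OF relax_iter_LIMSEQ[of x]] by (simp add: w_def)
  qed
  then show ?thesis
    unfolding w_def[symmetric] stab_set_iff_relax_le by simp
qed

lemma lim_relax_iter_le_stab_set:
  "f \<in> stab_set E s \<Longrightarrow> lim (\<lambda>n. relax_iter E s n x) \<le> f x"
  by (intro LIMSEQ_le_const2[OF relax_iter_LIMSEQ]) (blast intro: relax_iter_le_stab_set)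

end

lemma stabilizes_iff_bdd_relax_iter:
  "stabilizes E s \<longleftrightarrow> (\<forall>x. bdd_above (range (\<lambda>n. relax_iter E s n x)))"
proof
  assume "stabilizes E s"
  then obtain f where "f \<in> stab_set E s" unfolding stabilizes_def by auto
  then show "\<forall>x. bdd_above (range (\<lambda>n. relax_iter E s n x))"
    using relax_iter_le_stab_set by (metis bdd_aboveI2)
next
  assume "\<forall>x. bdd_above (range (\<lambda>n. relax_iter E s n x))"
  then show "stabilizes E s"
    using lim_relax_iter_in_stab_set unfolding stabilizes_def by blast
qed

lemma odometer_eq_lim_relax_iter:
  assumes "stabilizes E s"
  shows "odometer E s = (\<lambda>x. lim (\<lambda>n. relax_iter E s n x))"
proof
  fix x
  have "\<forall>x. bdd_above (range (\<lambda>n. relax_iter E s n x))"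
    using stabilizes_iff_bdd_relax_iter[THEN iffD1, OF assms] .
  then show "odometer E s x = lim (\<lambda>n. relax_iter E s n x)"
    unfolding odometer_def
    by (intro cInf_eq_minimum) (use lim_relax_iter_in_stab_set lim_relax_iter_le_stab_set in auto)
qed

lemma odometer_in_stab_set: "stabilizes E s \<Longrightarrow> odometer E s \<in> stab_set E s"
  using odometer_eq_lim_relax_iter lim_relax_iter_in_stab_set stabilizes_iff_bdd_relax_iter
  by metis

lemma relax_iter_measurable:
  "(\<lambda>s. relax_iter E s n x) \<in> borel_measurable config_space"
proof (induction n arbitrary: x)
  case 0
  then show ?case by simp
next
  case (Suc n)
  note Suc.IH[measurable]
  show ?case unfolding relax_iter.simps relax_def by measurable
qed

lemma odometer_measurable:
  assumes countable: "countable (UNIV :: 'v set)"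
  shows "odometer E \<in> measurable config_space config_space"
proof -
  note relax_iter_measurable[measurable]
  have bdd_iff: "bdd_above (range g) \<longleftrightarrow> (\<exists>k::nat. \<forall>n. g n \<le> real k)" for g :: "nat \<Rightarrow> real"
    by (auto simp: bdd_above_def) (meson order_trans real_arch_simple)
  have stabilizes_pred: "Measurable.pred config_space (stabilizes E)"
    unfolding stabilizes_iff_bdd_relax_iter bdd_iff
    by (intro measurable_pred_countable[OF countable, unfolded UNIV_I ball_UNIV]) measurable
  have "(\<lambda>s. odometer E s x) \<in> borel_measurable config_space" for x
  proof -
    have "(\<lambda>s. odometer E s x) =
          (\<lambda>s. if stabilizes E s then lim (\<lambda>n. relax_iter E s n x) else Inf {})"
    proof
      fix s
      show "odometer E s x =
            (if stabilizes E s then lim (\<lambda>n. relax_iter E s n x) else Inf {})"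
        by (cases "stabilizes E s")
          (simp add: odometer_eq_lim_relax_iter, simp add: odometer_def stabilizes_def)
    qed
    also have "\<dots> \<in> borel_measurable config_space"
      using stabilizes_pred by measurable
    finally show ?thesis .
  qed
  then show ?thesis
    by (intro measurable_PiM_single'[where f="\<lambda>x s. odometer E s x", simplified]) auto
qed

end

lemma countable_vertices:
  fixes E :: "'v \<Rightarrow> 'v \<Rightarrow> bool"
  assumes "connected_graph E" and "locally_finite E"
  shows "countable (UNIV :: 'v set)"
proof -
  fix x\<^sub>0 :: 'v
  have "finite {y. (E ^^ n) x\<^sub>0 y}" for n
  proof (induction n)
    case 0
    then show ?case by simp
  next
    case (Suc n)
    have "{y. (E ^^ Suc n) x\<^sub>0 y} = (\<Union>z\<in>{z. (E ^^ n) x\<^sub>0 z}. {y. E z y})" by auto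
    then show ?case using Suc assms(2) by (simp add: locally_finite_def)
  qed
  moreover have "UNIV = (\<Union>n. {y. (E ^^ n) x\<^sub>0 y})"
    using assms(1) unfolding connected_graph_def rtranclp_power by auto
  ultimately show ?thesis by (metis countable_UN countable_finite countableI_type)
qed

lemma neighbours_nonempty:
  fixes E :: "'v \<Rightarrow> 'v \<Rightarrow> bool"
  assumes "connected_graph E" and "infinite (UNIV :: 'v set)"
  shows "{y. E x y} \<noteq> {}"
proof -
  obtain y :: 'v where "y \<noteq> x"
    using assms(2) by (metis UNIV_eq_I finite.intros singletonI insertI1 finite_insert)
  moreover have "E\<^sup>*\<^sup>* x y" using assms(1) unfolding connected_graph_def by auto
  ultimately show ?thesis by (metis converse_rtranclpE empty_Collect_eq)
qed

lemma graph_aut_adj_inv: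
  assumes "\<alpha> \<in> graph_aut E"
  shows "E x y \<longleftrightarrow> E (inv \<alpha> x) (inv \<alpha> y)"
proof -
  have "bij \<alpha>" and "E (inv \<alpha> x) (inv \<alpha> y) \<longleftrightarrow> E (\<alpha> (inv \<alpha> x)) (\<alpha> (inv \<alpha> y))"
    using assms by (auto simp: graph_aut_def)
  then show ?thesis by (simp add: bij_is_surj surj_f_inv_f)
qed

lemma inv_in_graph_aut:
  assumes "\<alpha> \<in> graph_aut E"
  shows "inv \<alpha> \<in> graph_aut E"
proof -
  have "bij (inv \<alpha>)" using assms by (simp add: graph_aut_def bij_imp_bij_inv)
  moreover have "\<forall>x y. E x y \<longleftrightarrow> E (inv \<alpha> x) (inv \<alpha> y)"
    using graph_aut_adj_inv[OF assms] by blast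
  ultimately show ?thesis unfolding graph_aut_def by blast
qed

lemma shift_inv_shift: "bij \<alpha> \<Longrightarrow> shift (inv \<alpha>) (shift \<alpha> f) = f"
  by (simp add: shift_def inv_inv_eq bij_is_inj)

lemma graph_laplacian_shift:
  assumes "\<alpha> \<in> graph_aut E"
  shows "graph_laplacian E (shift \<alpha> f) x = graph_laplacian E f (inv \<alpha> x)"
proof -
  have bij: "bij \<alpha>" using assms by (simp add: graph_aut_def)
  have nbhd: "{y. E x y} = \<alpha> ` {z. E (inv \<alpha> x) z}"
    unfolding bij_image_Collect_eq[OF bij] using graph_aut_adj_inv[OF assms] by blast
  show ?thesis
    unfolding graph_laplacian_def nbhd
    by (subst sum.reindex[OF inj_on_subset[OF bij_is_inj[OF bij] subset_UNIV]])
      (use bij in \<open>auto simp: bij_is_inj shift_def inv_f_f\<close>)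
qed

lemma shift_in_stab_set:
  assumes "\<alpha> \<in> graph_aut E" and "f \<in> stab_set E s"
  shows "shift \<alpha> f \<in> stab_set E (shift \<alpha> s)"
proof -
  have "shift \<alpha> s x + graph_laplacian E (shift \<alpha> f) x \<le> 1" for x
    using assms(2) unfolding graph_laplacian_shift[OF assms(1)] by (auto simp: stab_set_def shift_def)
  then show ?thesis using assms(2) by (auto simp: stab_set_def shift_def)
qed

lemma stab_set_shift:
  assumes "\<alpha> \<in> graph_aut E"
  shows "stab_set E (shift \<alpha> s) = shift \<alpha> ` stab_set E s"
proof
  show "shift \<alpha> ` stab_set E s \<subseteq> stab_set E (shift \<alpha> s)"
    using shift_in_stab_set[OF assms] by auto
next
  have bij: "bij \<alpha>" using assms by (simp add: graph_aut_def)
  show "stab_set E (shift \<alpha> s) \<subseteq> shift \<alpha> ` stab_set E s"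
  proof
    fix g assume "g \<in> stab_set E (shift \<alpha> s)"
    then have "shift (inv \<alpha>) g \<in> stab_set E s"
      using shift_in_stab_set[OF inv_in_graph_aut[OF assms]] shift_inv_shift[OF bij] by metis
    moreover have "g = shift \<alpha> (shift (inv \<alpha>) g)"
      using shift_inv_shift[OF bij_imp_bij_inv[OF bij]] bij by (simp add: inv_inv_eq)
    ultimately show "g \<in> shift \<alpha> ` stab_set E s" by blast
  qed
qed

lemma odometer_shift:
  "\<alpha> \<in> graph_aut E \<Longrightarrow> odometer E (shift \<alpha> s) = shift \<alpha> (odometer E s)"
  unfolding odometer_def stab_set_shift image_image by (simp add: shift_def)

lemma shift_measurable: "shift \<alpha> \<in> measurable config_space config_space"
  unfolding shift_def
  by (rule measurable_PiM_single'[where f="\<lambda>x s. s (inv \<alpha> x)", simplified]) auto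

lemma invariant_law_distr:
  assumes "invariant_law \<Gamma> Q" and "sets Q = sets config_space"
    and F: "F \<in> measurable config_space config_space"
    and equivariant: "\<And>\<alpha> s. \<alpha> \<in> \<Gamma> \<Longrightarrow> F (shift \<alpha> s) = shift \<alpha> (F s)"
  shows "invariant_law \<Gamma> (distr Q config_space F)"
  unfolding invariant_law_def
proof
  fix \<alpha> assume "\<alpha> \<in> \<Gamma>"
  have FQ: "F \<in> measurable Q config_space" and shiftQ: "shift \<alpha> \<in> measurable Q config_space"
    using F shift_measurable measurable_cong_sets[OF assms(2) refl] by blast+
  have "distr (distr Q config_space F) config_space (shift \<alpha>) = distr Q config_space (shift \<alpha> \<circ> F)"
    by (rule distr_distr[OF shift_measurable FQ])
  also have "shift \<alpha> \<circ> F = F \<circ> shift \<alpha>"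
    using equivariant[OF \<open>\<alpha> \<in> \<Gamma>\<close>] by auto
  also have "distr Q config_space (F \<circ> shift \<alpha>) = distr (distr Q config_space (shift \<alpha>)) config_space F"
    by (rule distr_distr[OF F shiftQ, symmetric])
  also have "\<dots> = distr Q config_space F"
    using assms(1) \<open>\<alpha> \<in> \<Gamma>\<close> by (simp add: invariant_law_def)
  finally show "distr (distr Q config_space F) config_space (shift \<alpha>) = distr Q config_space F" .
qed

lemma invariant_law_marginal_eq:
  assumes "transitive_aut_group E \<Gamma>" and "invariant_law \<Gamma> Q" and "sets Q = sets config_space"
  shows "distr Q borel (\<lambda>f. f y) = distr Q borel (\<lambda>f. f x)"
proof -
  obtain \<alpha> where "\<alpha> \<in> \<Gamma>" and "\<alpha> x = y"
    using assms(1) unfolding transitive_aut_group_def by blast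
  then have "inj \<alpha>"
    using assms(1) by (auto simp: transitive_aut_group_def graph_aut_def bij_is_inj)
  have shiftQ: "shift \<alpha> \<in> measurable Q config_space"
    using shift_measurable measurable_cong_sets[OF assms(3) refl] by blast
  have "distr Q borel (\<lambda>f. f y) = distr (distr Q config_space (shift \<alpha>)) borel (\<lambda>f. f y)"
    using assms(2) \<open>\<alpha> \<in> \<Gamma>\<close> by (simp add: invariant_law_def)
  also have "\<dots> = distr Q borel ((\<lambda>f. f y) \<circ> shift \<alpha>)"
    by (rule distr_distr[OF _ shiftQ]) simp
  also have "(\<lambda>f. f y) \<circ> shift \<alpha> = (\<lambda>f. f x)"
    using \<open>inj \<alpha>\<close> \<open>\<alpha> x = y\<close> by (auto simp: shift_def)
  finally show ?thesis .
qed

lemma same_distr_integrable: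
  fixes X Y :: "'a \<Rightarrow> real"
  assumes "X \<in> borel_measurable P" and "Y \<in> borel_measurable P"
    and law: "distr P borel X = distr P borel Y" and "integrable P Y"
  shows "integrable P X" and "(\<integral>\<omega>. X \<omega> \<partial>P) = (\<integral>\<omega>. Y \<omega> \<partial>P)"
proof -
  have "integrable P X \<longleftrightarrow> integrable P Y"
    using integrable_distr_eq[OF assms(1), of "\<lambda>t. t"] integrable_distr_eq[OF assms(2), of "\<lambda>t. t"]
    by (simp add: law)
  then show "integrable P X" using assms(4) by blast
  show "(\<integral>\<omega>. X \<omega> \<partial>P) = (\<integral>\<omega>. Y \<omega> \<partial>P)"
    using integral_distr[OF assms(1), of "\<lambda>t. t"] integral_distr[OF assms(2), of "\<lambda>t. t"]
    by (simp add: law)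
qed

lemma integrable_integral_nonneg_of_mean_zero_limit:
  fixes f :: "nat \<Rightarrow> 'a \<Rightarrow> real"
  assumes h: "integrable M h"
    and f_int: "\<And>n. integrable M (f n)" and f_mean: "\<And>n. (\<integral>x. f n x \<partial>M) = 0"
    and f_le: "\<And>n. AE x in M. f n x \<le> h x"
    and f_lim: "AE x in M. (\<lambda>n. f n x) \<longlonglongrightarrow> g x"
    and g: "g \<in> borel_measurable M"
  shows "integrable M g \<and> 0 \<le> (\<integral>x. g x \<partial>M)"
proof -
  have "AE x in M. \<forall>n. f n x \<le> h x" using f_le by (simp add: AE_all_countable)
  with f_lim have g_le: "AE x in M. g x \<le> h x"
    by eventually_elim (blast intro: LIMSEQ_le_const2)
  have h_nonneg: "0 \<le> (\<integral>x. h x \<partial>M)"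
    using integral_mono_AE[OF f_int h f_le] f_mean by simp
  have "(\<integral>\<^sup>+x. ennreal (h x - g x) \<partial>M) = (\<integral>\<^sup>+x. liminf (\<lambda>n. ennreal (h x - f n x)) \<partial>M)"
    using f_lim by (intro nn_integral_cong_AE)
      (auto elim!: eventually_mono intro!: lim_imp_Liminf[symmetric] tendsto_ennrealI tendsto_diff)
  also have "\<dots> \<le> liminf (\<lambda>n. \<integral>\<^sup>+x. ennreal (h x - f n x) \<partial>M)"
    using h f_int by (intro nn_integral_liminf) auto
  also have "(\<lambda>n. \<integral>\<^sup>+x. ennreal (h x - f n x) \<partial>M) = (\<lambda>n. ennreal (\<integral>x. h x \<partial>M))"
  proof
    fix n
    have "(\<integral>\<^sup>+x. ennreal (h x - f n x) \<partial>M) = ennreal (\<integral>x. h x - f n x \<partial>M)"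
      using h f_int f_le[of n] by (intro nn_integral_eq_integral) (auto elim: eventually_mono)
    then show "(\<integral>\<^sup>+x. ennreal (h x - f n x) \<partial>M) = ennreal (\<integral>x. h x \<partial>M)"
      using h f_int f_mean by (simp add: integral_diff)
  qed
  finally have fatou: "(\<integral>\<^sup>+x. ennreal (h x - g x) \<partial>M) \<le> ennreal (\<integral>x. h x \<partial>M)"
    by (simp add: Liminf_const)
  have hg_int: "integrable M (\<lambda>x. h x - g x)"
    using fatou g h g_le
    by (intro integrableI_nonneg) (auto elim: eventually_mono simp: top.not_eq_extremum intro: le_less_trans)
  have "ennreal (\<integral>x. h x - g x \<partial>M) \<le> ennreal (\<integral>x. h x \<partial>M)"
    using fatou nn_integral_eq_integral[OF hg_int] g_le by (auto elim: eventually_mono)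
  then have "(\<integral>x. h x - g x \<partial>M) \<le> (\<integral>x. h x \<partial>M)"
    using h_nonneg by simp
  moreover have "integrable M (\<lambda>x. h x - (h x - g x))"
    and "(\<integral>x. h x - (h x - g x) \<partial>M) = (\<integral>x. h x \<partial>M) - (\<integral>x. h x - g x \<partial>M)"
    using Bochner_Integration.integrable_diff[OF h hg_int] Bochner_Integration.integral_diff[OF h hg_int] by simp_all
  ultimately show ?thesis by simp
qed

definition cutoff :: "nat \<Rightarrow> real \<Rightarrow> real" where
  "cutoff M a = min (max a 0) (real M)"

lemma sum_cutoff_diff_le:
  assumes "finite A" and "\<forall>y\<in>A. 0 \<le> u y" and "0 \<le> a" and "(\<Sum>y\<in>A. u y - a) \<le> c"
  shows "(\<Sum>y\<in>A. cutoff M (u y) - cutoff M a) \<le> \<bar>c\<bar>"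
proof (cases "a \<le> real M")
  case True
  have "(\<Sum>y\<in>A. cutoff M (u y) - cutoff M a) \<le> (\<Sum>y\<in>A. u y - a)"
    using True assms by (intro sum_mono) (auto simp: cutoff_def)
  then show ?thesis using assms(4) by linarith
next
  case False
  have "(\<Sum>y\<in>A. cutoff M (u y) - cutoff M a) \<le> (\<Sum>y\<in>A. 0)"
    using False assms by (intro sum_mono) (auto simp: cutoff_def)
  then show ?thesis by simp
qed

lemma eventually_sum_cutoff_diff_eq:
  assumes "finite A" and "\<forall>y\<in>A. 0 \<le> u y" and "0 \<le> a"
  shows "\<forall>\<^sub>F M in sequentially. (\<Sum>y\<in>A. cutoff M (u y) - cutoff M a) = (\<Sum>y\<in>A. u y - a)"
proof -
  define B where "B = a + (\<Sum>y\<in>A. u y)"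
  have eq: "(\<Sum>y\<in>A. cutoff M (u y) - cutoff M a) = (\<Sum>y\<in>A. u y - a)" if "B \<le> real M" for M
  proof (intro sum.cong refl)
    fix y assume "y \<in> A"
    then have "u y \<le> B" and "a \<le> B"
      using member_le_sum[of y A u] assms unfolding B_def by (auto simp: sum_nonneg)
    then show "cutoff M (u y) - cutoff M a = u y - a"
      using that assms \<open>y \<in> A\<close> by (simp add: cutoff_def)
  qed
  show ?thesis
    by (intro eventually_sequentiallyI[of "nat \<lceil>B\<rceil>"] eq) linarith
qed

lemma laplacian_integrable_mean_nonneg:
  fixes U :: "'a \<Rightarrow> 'v \<Rightarrow> real" and c :: "'a \<Rightarrow> real"
  assumes "finite_measure P" and fin: "finite {y. E x y}"
    and U: "\<And>y. (\<lambda>\<omega>. U \<omega> y) \<in> borel_measurable P"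
    and same_law: "\<And>y. E x y \<Longrightarrow> distr P borel (\<lambda>\<omega>. U \<omega> y) = distr P borel (\<lambda>\<omega>. U \<omega> x)"
    and nonneg: "AE \<omega> in P. \<forall>y. 0 \<le> U \<omega> y"
    and c: "integrable P c" and bounded: "AE \<omega> in P. graph_laplacian E (U \<omega>) x \<le> c \<omega>"
  shows "integrable P (\<lambda>\<omega>. graph_laplacian E (U \<omega>) x) \<and> 0 \<le> (\<integral>\<omega>. graph_laplacian E (U \<omega>) x \<partial>P)"
proof -
  interpret finite_measure P by fact
  define D where "D M \<omega> = (\<Sum>y\<in>{y. E x y}. cutoff M (U \<omega> y) - cutoff M (U \<omega> x))" for M \<omega>
  note U[measurable]
  have cutoff_measurable[measurable]: "cutoff M \<in> borel_measurable borel" for M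
    unfolding cutoff_def by measurable
  have cutoff_int: "integrable P (\<lambda>\<omega>. cutoff M (U \<omega> y))" for M y
    by (rule integrable_const_bound[where B="real M"]) (auto simp: cutoff_def)
  have cutoff_mean: "(\<integral>\<omega>. cutoff M (U \<omega> y) \<partial>P) = (\<integral>\<omega>. cutoff M (U \<omega> x) \<partial>P)" if "E x y" for M y
    using integral_distr[OF U[of y] cutoff_measurable] integral_distr[OF U[of x] cutoff_measurable]
    by (simp add: same_law[OF that])
  show ?thesis
  proof (rule integrable_integral_nonneg_of_mean_zero_limit[where f=D and h="\<lambda>\<omega>. \<bar>c \<omega>\<bar>"])
    show "integrable P (\<lambda>\<omega>. \<bar>c \<omega>\<bar>)" using c by auto
    show "integrable P (D M)" for M
      unfolding D_def by (intro Bochner_Integration.integrable_sum Bochner_Integration.integrable_diff cutoff_int)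
    show "(\<integral>\<omega>. D M \<omega> \<partial>P) = 0" for M
      unfolding D_def using cutoff_int cutoff_mean
      by (simp add: Bochner_Integration.integral_sum Bochner_Integration.integrable_diff)
    show "AE \<omega> in P. D M \<omega> \<le> \<bar>c \<omega>\<bar>" for M
      using nonneg bounded
      by eventually_elim (auto simp: D_def graph_laplacian_def intro!: sum_cutoff_diff_le fin)
    show "AE \<omega> in P. (\<lambda>M. D M \<omega>) \<longlonglongrightarrow> graph_laplacian E (U \<omega>) x"
      using nonneg
    proof eventually_elim
      case (elim \<omega>)
      then show ?case
        unfolding D_def graph_laplacian_def
        by (intro tendsto_eventually eventually_sum_cutoff_diff_eq fin) auto
    qed
    show "(\<lambda>\<omega>. graph_laplacian E (U \<omega>) x) \<in> borel_measurable P"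
      unfolding graph_laplacian_def by measurable
  qed
qed

lemma AE_laplacian_eq_of_mean_one:
  fixes S U :: "'a \<Rightarrow> 'v \<Rightarrow> real"
  assumes "prob_space P" and fin: "finite {y. E x y}"
    and U: "\<And>y. (\<lambda>\<omega>. U \<omega> y) \<in> borel_measurable P"
    and same_law: "\<And>y. E x y \<Longrightarrow> distr P borel (\<lambda>\<omega>. U \<omega> y) = distr P borel (\<lambda>\<omega>. U \<omega> x)"
    and nonneg: "AE \<omega> in P. \<forall>y. 0 \<le> U \<omega> y"
    and S_int: "integrable P (\<lambda>\<omega>. S \<omega> x)" and S_mean: "(\<integral>\<omega>. S \<omega> x \<partial>P) = 1"
    and stable: "AE \<omega> in P. S \<omega> x + graph_laplacian E (U \<omega>) x \<le> 1"
  shows "AE \<omega> in P. S \<omega> x + graph_laplacian E (U \<omega>) x = 1"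
proof -
  interpret prob_space P by fact
  define L where "L \<omega> = graph_laplacian E (U \<omega>) x" for \<omega>
  have L: "integrable P L \<and> 0 \<le> (\<integral>\<omega>. L \<omega> \<partial>P)"
    unfolding L_def
    using S_int stable
    by (intro laplacian_integrable_mean_nonneg[where c="\<lambda>\<omega>. 1 - S \<omega> x"] finite_measure_axioms fin U
        same_law nonneg) (auto elim: eventually_mono)
  define D where "D \<omega> = 1 - S \<omega> x - L \<omega>" for \<omega>
  have D_int: "integrable P D" unfolding D_def using S_int L by auto
  have D_nonneg: "AE \<omega> in P. 0 \<le> D \<omega>"
    using stable by eventually_elim (simp add: D_def L_def)
  have "(\<integral>\<omega>. D \<omega> \<partial>P) = - (\<integral>\<omega>. L \<omega> \<partial>P)"
    unfolding D_def using S_int L S_mean by (simp add: integral_diff prob_space)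
  then have "(\<integral>\<omega>. D \<omega> \<partial>P) = 0"
    using L integral_nonneg_AE[OF D_nonneg] by linarith
  then have "AE \<omega> in P. D \<omega> = 0"
    using integral_nonneg_eq_0_iff_AE[OF D_int D_nonneg] by simp
  then show ?thesis by eventually_elim (simp add: D_def L_def)
qed

lemma AE_odometer_laplacian_eq:
  fixes E :: "'v \<Rightarrow> 'v \<Rightarrow> bool"
  assumes \<Gamma>: "transitive_aut_group E \<Gamma>"
    and fin: "\<And>x. finite {y. E x y}" and nbhd: "\<And>x. {y. E x y} \<noteq> {}"
    and countable: "countable (UNIV :: 'v set)"
    and P: "prob_space P" "sets P = sets config_space" "invariant_law \<Gamma> P"
    and mean: "integrable P (\<lambda>s. s v\<^sub>0)" "(\<integral>s. s v\<^sub>0 \<partial>P) = 1"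
    and stabilizes: "AE s in P. stabilizes E s"
  shows "AE s in P. s x + graph_laplacian E (odometer E s) x = 1"
proof (rule AE_laplacian_eq_of_mean_one[where S="\<lambda>s. s" and U="odometer E", OF P(1) fin])
  have measurable_P: "measurable P = measurable config_space"
    using measurable_cong_sets[OF P(2) refl] by blast
  have odometer_P: "odometer E \<in> measurable P config_space"
    unfolding measurable_P by (rule odometer_measurable[OF fin nbhd countable])
  have component: "(\<lambda>f. f y) \<in> measurable config_space borel" for y :: 'v
    by simp
  show "(\<lambda>s. odometer E s y) \<in> borel_measurable P" for y
    using measurable_comp[OF odometer_P component] by (simp add: comp_def)
  have "invariant_law \<Gamma> (distr P config_space (odometer E))"
    using \<Gamma> odometer_measurable[OF fin nbhd countable]
    by (intro invariant_law_distr[OF P(3,2)] odometer_shift) (auto simp: transitive_aut_group_def)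
  then have "distr (distr P config_space (odometer E)) borel (\<lambda>f. f y) =
             distr (distr P config_space (odometer E)) borel (\<lambda>f. f x)" for y
    by (rule invariant_law_marginal_eq[OF \<Gamma> _ sets_distr])
  then show "distr P borel (\<lambda>s. odometer E s y) = distr P borel (\<lambda>s. odometer E s x)" for y
    unfolding distr_distr[OF component odometer_P] by (simp add: comp_def)
  have "AE s in P. odometer E s \<in> stab_set E s"
    using stabilizes by eventually_elim (rule odometer_in_stab_set[OF fin nbhd])
  then show "AE s in P. \<forall>y. 0 \<le> odometer E s y"
    and "AE s in P. s x + graph_laplacian E (odometer E s) x \<le> 1"
    by (auto elim: eventually_mono simp: stab_set_def)
  have "distr P borel (\<lambda>s. s x) = distr P borel (\<lambda>s. s v\<^sub>0)"
    by (rule invariant_law_marginal_eq[OF \<Gamma> P(3,2)])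
  then show "integrable P (\<lambda>s. s x)" and "(\<integral>s. s x \<partial>P) = 1"
    using same_distr_integrable[OF _ _ _ mean(1), of "\<lambda>s. s x"] mean(2) component
    unfolding measurable_P by auto
qed

theorem lemma4p3:
  fixes E :: "'v \<Rightarrow> 'v \<Rightarrow> bool" and v\<^sub>0 :: 'v
    and \<Gamma> :: "('v \<Rightarrow> 'v) set" and P :: "('v \<Rightarrow> real) measure"
  assumes "simple_graph E" and "infinite (UNIV :: 'v set)" and "connected_graph E"
    and "locally_finite E" and "vertex_transitive E"
    and "transitive_aut_group E \<Gamma>"
    and "prob_space P" and "sets P = sets config_space"
    and "invariant_law \<Gamma> P" and "ergodic_law \<Gamma> P"
    and "integrable P (\<lambda>s. s v\<^sub>0)"
    and "AE s in P. stabilizes E s"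
  shows "invariant_law \<Gamma> (distr P config_space (odometer E)) \<and>
         ((\<integral>s. s v\<^sub>0 \<partial>P) = 1 \<longrightarrow>
           (AE s in P. (\<forall>x. stabilization E s x = 1) \<and>
                      (\<forall>x. graph_laplacian E (odometer E s) x = 1 - s x)))"
proof (intro conjI impI)
  have fin: "\<And>x. finite {y. E x y}" using assms(4) by (simp add: locally_finite_def)
  have nbhd: "\<And>x. {y. E x y} \<noteq> {}" using neighbours_nonempty[OF assms(3,2)] .
  have countable: "countable (UNIV :: 'v set)" using countable_vertices[OF assms(3,4)] .
  show "invariant_law \<Gamma> (distr P config_space (odometer E))"
    using assms(6) odometer_measurable[OF fin nbhd countable]
    by (intro invariant_law_distr[OF assms(9,8)] odometer_shift) (auto simp: transitive_aut_group_def)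
  assume "(\<integral>s. s v\<^sub>0 \<partial>P) = 1"
  then have "\<forall>x\<in>UNIV. AE s in P. s x + graph_laplacian E (odometer E s) x = 1"
    using AE_odometer_laplacian_eq[OF assms(6) fin nbhd countable assms(7-9,11)] assms(12) by blast
  then have "AE s in P. \<forall>x\<in>UNIV. s x + graph_laplacian E (odometer E s) x = 1"
    by (rule iffD2[OF AE_ball_countable[OF countable]])
  then show "AE s in P. (\<forall>x. stabilization E s x = 1) \<and>
                        (\<forall>x. graph_laplacian E (odometer E s) x = 1 - s x)"
    by eventually_elim (auto simp: stabilization_def algebra_simps)
qed

end
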